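(* Let $F$ be a Legendre function, $\pi_0\in\Pi_{\mathrm{all}}$, and $\Pi\subseteq\Pi_{\mathrm{all}}$ closed and convex. Suppose a mechanism produces $\widehat\pi_F\in\Pi$ such that for every $\pi^*\in\Pi$, $$\mathbb{E}[\mathsf{B}_F(\pi^*(x)\parallel\widehat\pi_F(x))]\le\mathbb{E}[\mathsf{B}_F(\pi^*(x)\parallel\pi_0(x))]-\mathbb{E}[\mathsf{B}_F(\widehat\pi_F(x)\parallel\pi_0(x))],$$ and assume that almost everywhere the relevant values lie in the interior of the domain of $F$. Let $\{\mathcal{X}_i\}_{i\in I}$ be the partition of $\mathcal{X}$ given by $x\sim x'\iff\widehat\pi_F(x)=\widehat\pi_F(x')$ and $\mathcal{C}_F=\{\pi\in\Pi:\pi(x)=\pi(x')\ \forall x,x'\in\mathcal{X}_i,\ \forall i\in I\}$. Then $\widehat\pi_F=\arg\min_{\pi\in\Pi\cap\mathcal{C}_F}\mathbb{E}[\mathsf{B}_F(\pi(x)\parallel\pi_0(x))]$, i.e., $\widehat\pi_F$ is the unique Bregman projection of $\pi_0$ onto $\Pi\cap\mathcal{C}_F$.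
   Context: $\mathcal{X},\mathcal{Y}$ finite; $\Pi_{\mathrm{all}}=\Delta(\mathcal{Y})^{\mathcal{X}}$; $\mathcal{D}_{\mathcal{X}}$ full-support distribution on $\mathcal{X}$ and $\mathbb{E}=\mathbb{E}_{x\sim\mathcal{D}_{\mathcal{X}}}$. $\mathsf{B}_F(p\parallel q)=F(p)-F(q)-\langle\nabla F(q),p-q\rangle$. A Legendre function is proper, closed, convex, differentiable on the interior $\Omega$ of its domain, with $\nabla F\colon\Omega\to\mathrm{int}(\mathrm{dom}F^* )$ a bijection. *)

theory Defs
  imports "HOL-Analysis.Analysis"
begin

text \<open>A function F with effective domain D (= dom F) is represented by a real-valued
  function together with the set D; values of F outside D are irrelevant.\<close>

definition prob_simplex :: "(real^'y::finite) set" where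
  "prob_simplex = {p. (\<forall>y. 0 \<le> p $ y) \<and> (\<Sum>y\<in>UNIV. p $ y) = 1}"

definition Pi_all :: "(real^'y::finite^'x::finite) set" where
  "Pi_all = {\<pi>. \<forall>x. \<pi> $ x \<in> prob_simplex}"

definition grad :: "(real^'n::finite \<Rightarrow> real) \<Rightarrow> real^'n \<Rightarrow> real^'n" where
  "grad F q = (SOME g. (F has_derivative (\<lambda>h. g \<bullet> h)) (at q))"

text \<open>Effective domain of the convex conjugate F^*(u) = sup_{p in D} (u.p - F p).\<close>
definition conj_dom :: "(real^'n::finite \<Rightarrow> real) \<Rightarrow> (real^'n) set \<Rightarrow> (real^'n) set" where
  "conj_dom F D = {u. bdd_above ((\<lambda>p. u \<bullet> p - F p) ` D)}"

definition legendre :: "(real^'n::finite \<Rightarrow> real) \<Rightarrow> (real^'n) set \<Rightarrow> bool" where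
  "legendre F D \<longleftrightarrow>
     D \<noteq> {} \<and> convex D \<and> convex_on D F \<and>
     closed {(p, t). p \<in> D \<and> F p \<le> t} \<and>
     (\<forall>q\<in>interior D. F differentiable (at q)) \<and>
     bij_betw (grad F) (interior D) (interior (conj_dom F D))"

definition bregman :: "(real^'n::finite \<Rightarrow> real) \<Rightarrow> real^'n \<Rightarrow> real^'n \<Rightarrow> real" where
  "bregman F p q = F p - F q - grad F q \<bullet> (p - q)"

text \<open>Expectation over x ~ D_X, with D_X given by its probability weights w.\<close>
definition expect :: "('x::finite \<Rightarrow> real) \<Rightarrow> ('x \<Rightarrow> real) \<Rightarrow> real" where
  "expect w f = (\<Sum>x\<in>UNIV. w x * f x)"

definition CF :: "(real^'y::finite^'x::finite) set \<Rightarrow> real^'y^'x \<Rightarrow> (real^'y^'x) set" where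
  "CF PP pihat = {\<pi>\<in>PP. \<forall>x x'. pihat $ x = pihat $ x' \<longrightarrow> \<pi> $ x = \<pi> $ x'}"

end

theory Submission
  imports Defs
begin

text \<open>Together with the nonnegativity of Bregman divergences, the assumed three-point inequality
  gives \<open>E[B(pihat || \<pi>0)] \<le> E[B(\<pi> || \<pi>0)] - E[B(\<pi> || pihat)] \<le> E[B(\<pi> || \<pi>0)]\<close> for every
  \<open>\<pi>\<close> in \<open>\<Pi>\<close>, so \<open>pihat\<close> minimises over all of \<open>\<Pi>\<close>, a fortiori over \<open>\<Pi> \<inter> C_F\<close>. At a second minimiser \<open>\<pi>\<close> the inequality forces
  \<open>E[B(\<pi> || pihat)] = 0\<close>, and the Bregman divergence of a Legendre function vanishes only on the
  diagonal: if \<open>B(p || q) = 0\<close> with \<open>q\<close> interior, convexity makes the midpoint \<open>m\<close> of \<open>p\<close> and \<open>q\<close> an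
  interior minimiser of \<open>B(\<cdot> || q)\<close>, hence \<open>\<nabla>F m = \<nabla>F q\<close>, and injectivity of \<open>\<nabla>F\<close> gives \<open>p = q\<close>.\<close>

lemma linear_functional_eq_inner:
  fixes f :: "'a::euclidean_space \<Rightarrow> real"
  assumes "linear f"
  shows "\<exists>v. f = (\<lambda>h. v \<bullet> h)"
  by (metis adjoint_works assms inner_commute real_inner_1_right)

lemma has_derivative_grad:
  fixes F :: "real^'n::finite \<Rightarrow> real"
  assumes "F differentiable (at q)"
  shows "(F has_derivative (\<lambda>h. grad F q \<bullet> h)) (at q)"
proof -
  obtain F' where F': "(F has_derivative F') (at q)"
    using assms differentiable_def by blast
  then obtain v where "F' = (\<lambda>h. v \<bullet> h)"
    using has_derivative_linear linear_functional_eq_inner by blast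
  then have "\<exists>g. (F has_derivative (\<lambda>h. g \<bullet> h)) (at q)"
    using F' by blast
  then show ?thesis
    unfolding grad_def by (rule someI_ex)
qed

lemma convex_on_has_derivative_le:
  fixes F :: "'a::real_normed_vector \<Rightarrow> real"
  assumes conv: "convex_on D F" and q: "q \<in> D" and p: "p \<in> D"
    and deriv: "(F has_derivative F') (at q)"
  shows "F' (p - q) \<le> F p - F q"
proof -
  define d where "d = p - q"
  have path: "((\<lambda>t::real. q + t *\<^sub>R d) has_derivative (\<lambda>t. t *\<^sub>R d)) (at 0)"
    by (intro derivative_eq_intros) auto
  have "(F has_derivative F') (at (q + (0::real) *\<^sub>R d))"
    using deriv by simp
  from has_derivative_compose[OF path this]
  have "((\<lambda>t. F (q + t *\<^sub>R d)) has_field_derivative F' d) (at 0)"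
    using linear_scale[OF has_derivative_linear[OF deriv]]
    by (simp add: has_field_derivative_def mult.commute[of _ "F' d"])
  then have "((\<lambda>t. (F (q + t *\<^sub>R d) - F q) / t) \<longlongrightarrow> F' d) (at_right 0)"
    by (auto simp: has_field_derivative_iff intro: tendsto_mono at_le)
  moreover have "\<forall>\<^sub>F t in at_right 0. t \<in> {0<..<1::real}"
    by (rule eventually_at_right_real) simp
  then have "\<forall>\<^sub>F t in at_right 0. (F (q + t *\<^sub>R d) - F q) / t \<le> F p - F q"
  proof eventually_elim
    case (elim t)
    have "q + t *\<^sub>R d = (1 - t) *\<^sub>R q + t *\<^sub>R p"
      by (simp add: d_def algebra_simps)
    then have "F (q + t *\<^sub>R d) \<le> (1 - t) * F q + t * F p"
      using convex_onD[OF conv, of t q p] elim q p by simp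
    then show ?case
      using elim by (simp add: field_simps)
  qed
  ultimately have "F' d \<le> F p - F q"
    by (intro tendsto_upperbound) auto
  then show ?thesis
    by (simp add: d_def)
qed

lemma legendre_grad_inner_le:
  assumes "legendre F D" "q \<in> interior D" "p \<in> D"
  shows "grad F q \<bullet> (p - q) \<le> F p - F q"
  using assms interior_subset
  by (intro convex_on_has_derivative_le[of D] has_derivative_grad) (auto simp: legendre_def)

lemma bregman_nonneg:
  assumes "legendre F D" "q \<in> interior D" "p \<in> D"
  shows "0 \<le> bregman F p q"
  using legendre_grad_inner_le[OF assms] by (simp add: bregman_def)

lemma bregman_convex_combination_le:
  assumes "convex_on D F" "q \<in> D" "p \<in> D" "0 \<le> t" "t \<le> 1"
  shows "bregman F ((1 - t) *\<^sub>R q + t *\<^sub>R p) q \<le> t * bregman F p q"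
proof -
  have "F ((1 - t) *\<^sub>R q + t *\<^sub>R p) \<le> (1 - t) * F q + t * F p"
    using assms by (intro convex_onD) auto
  moreover have "(1 - t) *\<^sub>R q + t *\<^sub>R p - q = t *\<^sub>R (p - q)"
    by (simp add: algebra_simps)
  ultimately show ?thesis
    by (simp add: bregman_def algebra_simps)
qed

lemma bregman_eq_0_imp_grad_eq:
  assumes leg: "legendre F D" and q: "q \<in> interior D" and z: "z \<in> interior D"
    and zero: "bregman F z q = 0"
  shows "grad F z = grad F q"
proof -
  have "(F has_derivative (\<lambda>h. grad F z \<bullet> h)) (at z)"
    using leg z by (intro has_derivative_grad) (auto simp: legendre_def)
  then have "((\<lambda>x. bregman F x q) has_derivative (\<lambda>h. grad F z \<bullet> h - grad F q \<bullet> h)) (at z)"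
    unfolding bregman_def by (auto intro!: derivative_eq_intros simp: inner_diff_right)
  moreover have "\<forall>\<^sub>F x in at z. bregman F z q \<le> bregman F x q"
    using eventually_at_in_open'[OF open_interior z]
    by eventually_elim (use zero bregman_nonneg[OF leg q] interior_subset in auto)
  ultimately have "(\<lambda>h. grad F z \<bullet> h - grad F q \<bullet> h) = (\<lambda>h. 0)"
    by (rule has_derivative_local_min)
  then show ?thesis
    by (metis vector_eq_rdot right_minus_eq)
qed

lemma bregman_eq_0_imp_eq:
  assumes leg: "legendre F D" and q: "q \<in> interior D" and p: "p \<in> D"
    and zero: "bregman F p q = 0"
  shows "p = q"
proof (rule ccontr)
  assume "p \<noteq> q"
  define m where "m = midpoint q p"
  have convD: "convex D" and convF: "convex_on D F"
    and inj: "inj_on (grad F) (interior D)"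
    using leg by (auto simp: legendre_def bij_betw_def)
  have qD: "q \<in> D"
    using q interior_subset by blast
  have m: "m \<in> interior D"
    using in_interior_closure_convex_segment[OF convD q] closure_subset p \<open>p \<noteq> q\<close>
    unfolding m_def by (metis midpoint_in_open_segment subsetD)
  have "m = (1 - 1/2) *\<^sub>R q + (1/2) *\<^sub>R p"
    by (simp add: m_def midpoint_def scaleR_add_right inverse_eq_divide)
  then have "bregman F m q \<le> 0"
    using bregman_convex_combination_le[OF convF qD p, where t = "1/2"] zero
    by simp
  then have "bregman F m q = 0"
    using bregman_nonneg[OF leg q] m interior_subset by (meson antisym subsetD)
  then have "m = q"
    using bregman_eq_0_imp_grad_eq[OF leg q m] inj m q by (meson inj_onD)
  then show False
    using \<open>p \<noteq> q\<close> by (simp add: m_def)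
qed

lemma expect_nonneg:
  assumes "\<And>x. 0 \<le> w x" "\<And>x. 0 \<le> f x"
  shows "0 \<le> expect w f"
  unfolding expect_def using assms by (intro sum_nonneg mult_nonneg_nonneg)

lemma expect_eq_0_iff:
  assumes "\<And>x. 0 < w x" "\<And>x. 0 \<le> f x"
  shows "expect w f = 0 \<longleftrightarrow> (\<forall>x. f x = 0)"
proof -
  have "w x \<noteq> 0" for x
    using assms(1)[of x] by simp
  then show ?thesis
    unfolding expect_def using assms by (subst sum_nonneg_eq_0_iff) (auto simp: less_imp_le)
qed

theorem theorem16:
  fixes F :: "real^'y::finite \<Rightarrow> real" and D :: "(real^'y) set"
    and w :: "'x::finite \<Rightarrow> real"
    and \<pi>0 pihat :: "real^'y^'x" and PP :: "(real^'y^'x) set"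
  assumes leg: "legendre F D"
    and w_pos: "\<forall>x. 0 < w x" and w_sum: "(\<Sum>x\<in>UNIV. w x) = 1"
    and pi0: "\<pi>0 \<in> Pi_all"
    and Pi_sub: "PP \<subseteq> Pi_all" and Pi_closed: "closed PP" and Pi_convex: "convex PP"
    and pihat_in: "pihat \<in> PP"
    and mech: "\<forall>\<pi>s\<in>PP. expect w (\<lambda>x. bregman F (\<pi>s $ x) (pihat $ x))
                 \<le> expect w (\<lambda>x. bregman F (\<pi>s $ x) (\<pi>0 $ x))
                   - expect w (\<lambda>x. bregman F (pihat $ x) (\<pi>0 $ x))"
    and int_pi0: "\<forall>x. \<pi>0 $ x \<in> interior D"
    and int_pihat: "\<forall>x. pihat $ x \<in> interior D"
    and dom_Pi: "\<forall>\<pi>\<in>PP. \<forall>x. \<pi> $ x \<in> D"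
  shows "pihat \<in> PP \<inter> CF PP pihat
    \<and> (\<forall>\<pi>\<in>PP \<inter> CF PP pihat.
          expect w (\<lambda>x. bregman F (pihat $ x) (\<pi>0 $ x))
            \<le> expect w (\<lambda>x. bregman F (\<pi> $ x) (\<pi>0 $ x)))
    \<and> (\<forall>\<pi>\<in>PP \<inter> CF PP pihat.
          expect w (\<lambda>x. bregman F (\<pi> $ x) (\<pi>0 $ x))
            = expect w (\<lambda>x. bregman F (pihat $ x) (\<pi>0 $ x)) \<longrightarrow> \<pi> = pihat)"
proof -
  have pointwise_nonneg: "0 \<le> bregman F (\<pi> $ x) (pihat $ x)" if "\<pi> \<in> PP" for \<pi> x
    using bregman_nonneg[OF leg] int_pihat dom_Pi that by blast
  have divergence_nonneg: "0 \<le> expect w (\<lambda>x. bregman F (\<pi> $ x) (pihat $ x))"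
    if "\<pi> \<in> PP" for \<pi>
    using w_pos pointwise_nonneg[OF that] by (intro expect_nonneg) (auto simp: less_imp_le)
  have minimal: "expect w (\<lambda>x. bregman F (pihat $ x) (\<pi>0 $ x))
      \<le> expect w (\<lambda>x. bregman F (\<pi> $ x) (\<pi>0 $ x))" if "\<pi> \<in> PP" for \<pi>
    using mech[rule_format, OF that] divergence_nonneg[OF that] by linarith
  have unique: "\<pi> = pihat" if \<pi>: "\<pi> \<in> PP" and "expect w (\<lambda>x. bregman F (\<pi> $ x) (\<pi>0 $ x))
      = expect w (\<lambda>x. bregman F (pihat $ x) (\<pi>0 $ x))" for \<pi>
  proof -
    have "expect w (\<lambda>x. bregman F (\<pi> $ x) (pihat $ x)) = 0"
      using mech[rule_format, OF \<pi>] divergence_nonneg[OF \<pi>] that(2) by linarith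
    then have "bregman F (\<pi> $ x) (pihat $ x) = 0" for x
      using expect_eq_0_iff[of w, OF _ pointwise_nonneg[OF \<pi>]] w_pos by simp
    then show ?thesis
      using bregman_eq_0_imp_eq[OF leg] int_pihat dom_Pi \<pi> by (simp add: vec_eq_iff)
  qed
  have "pihat \<in> PP \<inter> CF PP pihat"
    using pihat_in by (auto simp: CF_def)
  then show ?thesis
    using minimal unique by blast
qed

end
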